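(* Let $\alpha\in(0,\frac\pi2)$ and $C_\alpha=(\alpha/\pi)^2+(1-\alpha/\pi)^2$. Let $N^v,N^b\in\{0,1,2,\dots\}$, and let $\{n^0_j\}_{j=1}^{N^v}$, $\{n^+_i,n^-_i\}_{i=1}^{N^b}$ be integers with $\sum_{i=1}^{N^b}(n^+_i+n^-_i)+\sum_{j=1}^{N^v}n^0_j=D$. Then $$\sum_{j=1}^{N^v}(n^0_j)^2+\sum_{i=1}^{N^b}\Big[\Big(n^-_i+\frac\alpha\pi\Big)^2+\Big(n^+_i-\frac\alpha\pi\Big)^2\Big]\ge|D|\,C_\alpha.$$ Furthermore, if $D>0$, equality holds if and only if $n^0_j=0$ for all $j$, $N^b=D$, and $n^+_i=1$, $n^-_i=0$ for $i=1,\dots,D$; while if $D<0$, equality holds if and only if $n^0_j=0$ for all $j$, $N^b=|D|$, and $n^+_i=0$, $n^-_i=-1$ for all $i$. *)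

theory Defs
  imports Complex_Main
begin

definition C_alpha :: "real \<Rightarrow> real" where
  "C_alpha \<alpha> = (\<alpha> / pi)\<^sup>2 + (1 - \<alpha> / pi)\<^sup>2"

end

theory Submission
  imports Defs
begin

(* Put a = alpha/pi, so 0 < a < 1/2 and C_alpha alpha = a^2 + (1 - a)^2 < 1.  Every vertex term
   n^2 and every boundary term (m + a)^2 + (p - a)^2 is at least C_alpha times the absolute value
   of its own charge (n, resp. m + p); summing and using the triangle inequality gives the bound.
   For a vertex term equality forces n = 0; for a boundary term of charge m + p >= 0 it forces
   (m, p) = (0, 1).  In the equality case the triangle inequality must be tight as well, so for
   D > 0 no charge is negative and every boundary term is the unit charge (0, 1).  The case D < 0
   follows from the symmetry (n0, n+, n-) |-> (-n0, -n-, -n+), which preserves the left-hand side. *)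

lemma square_add_square_one_minus_lt_one:
  fixes a :: real
  assumes "0 < a" "a < 1"
  shows "a\<^sup>2 + (1 - a)\<^sup>2 < 1"
proof -
  have "a\<^sup>2 + (1 - a)\<^sup>2 = 1 - 2 * (a * (1 - a))"
    by (simp add: power2_eq_square algebra_simps)
  moreover have "0 < a * (1 - a)"
    using assms by simp
  ultimately show ?thesis
    by simp
qed

lemma abs_mult_le_int_square:
  fixes n :: int and C :: real
  assumes "C \<le> 1"
  shows "\<bar>of_int n\<bar> * C \<le> (of_int n)\<^sup>2"
proof -
  have "\<bar>of_int n\<bar> * C \<le> \<bar>real_of_int n\<bar>"
    using assms by (simp add: mult_left_le)
  also have "\<dots> \<le> \<bar>of_int n\<bar> * \<bar>of_int n\<bar>"
  proof (cases "n = 0")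
    case False
    then have one_le: "1 \<le> \<bar>real_of_int n\<bar>"
      by linarith
    show ?thesis
      using mult_left_mono[OF one_le, of "\<bar>real_of_int n\<bar>"] by simp
  qed simp
  finally show ?thesis
    by (simp add: power2_eq_square)
qed

lemma int_square_eq_abs_mult_iff:
  fixes n :: int and C :: real
  assumes "C < 1"
  shows "(of_int n)\<^sup>2 = \<bar>of_int n\<bar> * C \<longleftrightarrow> n = 0"
proof
  assume eq: "(of_int n)\<^sup>2 = \<bar>of_int n\<bar> * C"
  show "n = 0"
  proof (rule ccontr)
    assume "n \<noteq> 0"
    then have "1 \<le> \<bar>real_of_int n\<bar>"
      by linarith
    then have "\<bar>of_int n\<bar> * C < \<bar>real_of_int n\<bar> * \<bar>of_int n\<bar>"
      using assms by (intro mult_strict_left_mono) auto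
    then show False
      using eq by (simp add: power2_eq_square)
  qed
qed simp

lemma pair_energy_gt_nonneg_charge:
  fixes m p :: int and a :: real
  assumes "0 < a" "a < 1/2" "0 \<le> m + p" "\<not> (m = 0 \<and> p = 1)"
  shows "of_int (m + p) * (a\<^sup>2 + (1 - a)\<^sup>2) < (of_int m + a)\<^sup>2 + (of_int p - a)\<^sup>2"
proof -
  have C_lt_1: "a\<^sup>2 + (1 - a)\<^sup>2 < 1"
    using assms(1,2) by (intro square_add_square_one_minus_lt_one) simp_all
  consider "m + p = 0" | "m + p = 1" | "m + p \<ge> 2"
    using assms(3) by linarith
  then show ?thesis
  proof cases
    case 1
    have "m \<ge> 0 \<or> m \<le> -1"
      by linarith
    then have "of_int m \<ge> (0::real) \<or> of_int m \<le> (-1::real)"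
      by auto
    then have "of_int m + a \<noteq> 0"
      using assms(1,2) by linarith
    then show ?thesis
      using 1 by (simp add: add_pos_nonneg)
  next
    case 2
    then have p: "real_of_int p = 1 - of_int m"
      by linarith
    have "m \<noteq> 0"
      using 2 assms(4) by auto
    then have "0 < of_int m * (of_int m - (1 - 2 * a))"
      using assms(1,2) by (cases "m > 0") (auto intro: mult_pos_pos mult_neg_neg)
    moreover have "(of_int m + a)\<^sup>2 + (of_int p - a)\<^sup>2
        = a\<^sup>2 + (1 - a)\<^sup>2 + 2 * (of_int m * (of_int m - (1 - 2 * a)))"
      unfolding p by (simp add: power2_eq_square algebra_simps)
    ultimately show ?thesis
      using 2 by simp
  next
    case 3
    define s where "s = real_of_int (m + p)"
    have "s\<^sup>2 \<le> 2 * ((of_int m + a)\<^sup>2 + (of_int p - a)\<^sup>2)"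
      using zero_le_power2[of "of_int m + a - (of_int p - a)"]
      by (simp add: s_def power2_eq_square algebra_simps)
    moreover have "2 * s \<le> s\<^sup>2"
    proof -
      have "2 \<le> s"
        using 3 by (simp add: s_def)
      then show ?thesis
        using mult_right_mono[of 2 s s] by (simp add: power2_eq_square)
    qed
    moreover have "s * (a\<^sup>2 + (1 - a)\<^sup>2) < s"
      using 3 C_lt_1 by (simp add: s_def)
    ultimately show ?thesis
      by (simp add: s_def)
  qed
qed

lemma pair_energy_eq_nonneg_charge_iff:
  fixes m p :: int and a :: real
  assumes "0 < a" "a < 1/2" "0 \<le> m + p"
  shows "(of_int m + a)\<^sup>2 + (of_int p - a)\<^sup>2 = of_int (m + p) * (a\<^sup>2 + (1 - a)\<^sup>2)
    \<longleftrightarrow> m = 0 \<and> p = 1"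
  using pair_energy_gt_nonneg_charge[OF assms] by (cases "m = 0 \<and> p = 1") auto

lemma pair_energy_ge:
  fixes m p :: int and a :: real
  assumes "0 < a" "a < 1/2"
  shows "\<bar>of_int (m + p)\<bar> * (a\<^sup>2 + (1 - a)\<^sup>2) \<le> (of_int m + a)\<^sup>2 + (of_int p - a)\<^sup>2"
proof (cases "0 \<le> m + p")
  case True
  then show ?thesis
    using pair_energy_gt_nonneg_charge[OF assms True] by (cases "m = 0 \<and> p = 1") auto
next
  case False
  then have nonneg: "0 \<le> -p + -m"
    by simp
  have "of_int (-p + -m) * (a\<^sup>2 + (1 - a)\<^sup>2) \<le> (of_int (-p) + a)\<^sup>2 + (of_int (-m) - a)\<^sup>2"
    using pair_energy_gt_nonneg_charge[OF assms nonneg] by (cases "-p = 0 \<and> -m = 1") auto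
  moreover have "(of_int (-p) + a)\<^sup>2 + (of_int (-m) - a)\<^sup>2 = (of_int m + a)\<^sup>2 + (of_int p - a)\<^sup>2"
    by (simp add: power2_commute add.commute)
  moreover have "\<bar>real_of_int (m + p)\<bar> = of_int (-p + -m)"
    using False by simp
  ultimately show ?thesis
    by simp
qed

lemma sum_abs_eq_sum_imp_nonneg:
  fixes f :: "'i \<Rightarrow> 'a :: linordered_idom"
  assumes "finite A" "(\<Sum>i\<in>A. \<bar>f i\<bar>) = sum f A" "i \<in> A"
  shows "0 \<le> f i"
proof -
  have "f i = \<bar>f i\<bar>"
    using sum_mono_inv[OF assms(2)[symmetric] _ assms(3,1)] by simp
  then show ?thesis
    by (metis abs_ge_zero)
qed

definition energy :: "real \<Rightarrow> nat \<Rightarrow> nat \<Rightarrow> (nat \<Rightarrow> int) \<Rightarrow> (nat \<Rightarrow> int) \<Rightarrow> (nat \<Rightarrow> int) \<Rightarrow> real"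
  where "energy a Nv Nb n0 np nm =
    (\<Sum>j=1..Nv. (real_of_int (n0 j))\<^sup>2)
    + (\<Sum>i=1..Nb. (real_of_int (nm i) + a)\<^sup>2 + (real_of_int (np i) - a)\<^sup>2)"

lemma energy_negate:
  "energy a Nv Nb (\<lambda>j. - n0 j) (\<lambda>i. - nm i) (\<lambda>i. - np i) = energy a Nv Nb n0 np nm"
  unfolding energy_def by (simp add: power2_commute add.commute)

definition total_abs_charge :: "nat \<Rightarrow> nat \<Rightarrow> (nat \<Rightarrow> int) \<Rightarrow> (nat \<Rightarrow> int) \<Rightarrow> (nat \<Rightarrow> int) \<Rightarrow> int"
  where "total_abs_charge Nv Nb n0 np nm = (\<Sum>i=1..Nb. \<bar>np i + nm i\<bar>) + (\<Sum>j=1..Nv. \<bar>n0 j\<bar>)"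

lemma abs_charge_le_total_abs_charge:
  assumes "(\<Sum>i=1..Nb. np i + nm i) + (\<Sum>j=1..Nv. n0 j) = D"
  shows "\<bar>D\<bar> \<le> total_abs_charge Nv Nb n0 np nm"
  unfolding total_abs_charge_def assms[symmetric]
  by (rule order_trans[OF abs_triangle_ineq add_mono[OF sum_abs sum_abs]])

lemma total_abs_charge_le_energy:
  assumes "0 < a" "a < 1/2"
  shows "of_int (total_abs_charge Nv Nb n0 np nm) * (a\<^sup>2 + (1 - a)\<^sup>2) \<le> energy a Nv Nb n0 np nm"
    and "of_int (total_abs_charge Nv Nb n0 np nm) * (a\<^sup>2 + (1 - a)\<^sup>2) = energy a Nv Nb n0 np nm
      \<Longrightarrow> (\<forall>j\<in>{1..Nv}. n0 j = 0) \<and> (\<forall>i\<in>{1..Nb}. \<bar>of_int (np i + nm i)\<bar> * (a\<^sup>2 + (1 - a)\<^sup>2)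
            = (of_int (nm i) + a)\<^sup>2 + (of_int (np i) - a)\<^sup>2)"
proof -
  let ?C = "a\<^sup>2 + (1 - a)\<^sup>2"
  have C_lt_1: "?C < 1"
    using assms by (intro square_add_square_one_minus_lt_one) simp_all
  let ?vertex_bound = "\<Sum>j=1..Nv. \<bar>real_of_int (n0 j)\<bar> * ?C"
  let ?pair_bound = "\<Sum>i=1..Nb. \<bar>real_of_int (np i + nm i)\<bar> * ?C"
  have vertex_le: "?vertex_bound \<le> (\<Sum>j=1..Nv. (real_of_int (n0 j))\<^sup>2)"
    using C_lt_1 by (intro sum_mono abs_mult_le_int_square) simp
  have pair_le: "?pair_bound \<le> (\<Sum>i=1..Nb. (real_of_int (nm i) + a)\<^sup>2 + (real_of_int (np i) - a)\<^sup>2)"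
    using pair_energy_ge[OF assms] by (intro sum_mono) (simp add: add.commute)
  have total: "of_int (total_abs_charge Nv Nb n0 np nm) * ?C = ?pair_bound + ?vertex_bound"
    by (simp add: total_abs_charge_def sum_distrib_right distrib_right)
  show "of_int (total_abs_charge Nv Nb n0 np nm) * ?C \<le> energy a Nv Nb n0 np nm"
    unfolding total energy_def using vertex_le pair_le by linarith
  assume "of_int (total_abs_charge Nv Nb n0 np nm) * ?C = energy a Nv Nb n0 np nm"
  then have vertex_eq: "?vertex_bound = (\<Sum>j=1..Nv. (real_of_int (n0 j))\<^sup>2)"
    and pair_eq: "?pair_bound = (\<Sum>i=1..Nb. (real_of_int (nm i) + a)\<^sup>2 + (real_of_int (np i) - a)\<^sup>2)"
    unfolding total energy_def using vertex_le pair_le by linarith+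
  have "\<forall>j\<in>{1..Nv}. (real_of_int (n0 j))\<^sup>2 = \<bar>of_int (n0 j)\<bar> * ?C"
    using sum_mono_inv[OF vertex_eq] C_lt_1 abs_mult_le_int_square by fastforce
  moreover have "\<forall>i\<in>{1..Nb}. \<bar>of_int (np i + nm i)\<bar> * ?C
      = (of_int (nm i) + a)\<^sup>2 + (of_int (np i) - a)\<^sup>2"
    using sum_mono_inv[OF pair_eq] pair_energy_ge[OF assms] by (fastforce simp: add.commute)
  ultimately show "(\<forall>j\<in>{1..Nv}. n0 j = 0) \<and> (\<forall>i\<in>{1..Nb}. \<bar>of_int (np i + nm i)\<bar> * ?C
      = (of_int (nm i) + a)\<^sup>2 + (of_int (np i) - a)\<^sup>2)"
    using int_square_eq_abs_mult_iff[OF C_lt_1] by blast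
qed

lemma energy_ge_abs_charge:
  assumes "0 < a" "a < 1/2" "(\<Sum>i=1..Nb. np i + nm i) + (\<Sum>j=1..Nv. n0 j) = D"
  shows "of_int \<bar>D\<bar> * (a\<^sup>2 + (1 - a)\<^sup>2) \<le> energy a Nv Nb n0 np nm"
proof -
  have "of_int \<bar>D\<bar> * (a\<^sup>2 + (1 - a)\<^sup>2)
      \<le> of_int (total_abs_charge Nv Nb n0 np nm) * (a\<^sup>2 + (1 - a)\<^sup>2)"
    using abs_charge_le_total_abs_charge[OF assms(3)] by (intro mult_right_mono) simp_all
  also have "\<dots> \<le> energy a Nv Nb n0 np nm"
    using total_abs_charge_le_energy(1)[OF assms(1,2)] .
  finally show ?thesis .
qed

lemma energy_eq_pos_charge_iff:
  assumes "0 < a" "a < 1/2" "(\<Sum>i=1..Nb. np i + nm i) + (\<Sum>j=1..Nv. n0 j) = D" "0 < D"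
  shows "energy a Nv Nb n0 np nm = of_int D * (a\<^sup>2 + (1 - a)\<^sup>2)
    \<longleftrightarrow> (\<forall>j\<in>{1..Nv}. n0 j = 0) \<and> int Nb = D \<and> (\<forall>i\<in>{1..Nb}. np i = 1 \<and> nm i = 0)"
proof
  let ?C = "a\<^sup>2 + (1 - a)\<^sup>2"
  let ?T = "total_abs_charge Nv Nb n0 np nm"
  assume eq: "energy a Nv Nb n0 np nm = of_int D * ?C"
  have C_pos: "0 < ?C"
    using assms(1) by (simp add: add_pos_nonneg)
  have "of_int ?T * ?C \<le> energy a Nv Nb n0 np nm"
    by (rule total_abs_charge_le_energy(1)[OF assms(1,2)])
  then have "of_int ?T * ?C \<le> of_int D * ?C"
    using eq by simp
  moreover have "D \<le> ?T"
    using abs_charge_le_total_abs_charge[OF assms(3)] by simp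
  ultimately have T_eq: "?T = D"
    using C_pos by (simp add: mult_le_cancel_right)
  then have "of_int ?T * ?C = energy a Nv Nb n0 np nm"
    using eq by simp
  then obtain vertex_zero: "\<forall>j\<in>{1..Nv}. n0 j = 0"
    and pair_tight: "\<forall>i\<in>{1..Nb}. \<bar>of_int (np i + nm i)\<bar> * ?C
      = (of_int (nm i) + a)\<^sup>2 + (of_int (np i) - a)\<^sup>2"
    using total_abs_charge_le_energy(2)[OF assms(1,2)] by blast
  have "(\<Sum>i=1..Nb. \<bar>np i + nm i\<bar>) = (\<Sum>i=1..Nb. np i + nm i)"
    using T_eq assms(3) vertex_zero by (simp add: total_abs_charge_def)
  then have "\<forall>i\<in>{1..Nb}. 0 \<le> nm i + np i"
    using sum_abs_eq_sum_imp_nonneg[of "{1..Nb}" "\<lambda>i. np i + nm i"] by (simp add: add.commute)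
  then have unit: "\<forall>i\<in>{1..Nb}. np i = 1 \<and> nm i = 0"
    using pair_tight pair_energy_eq_nonneg_charge_iff[OF assms(1,2)] by (fastforce simp: add.commute)
  then have "D = (\<Sum>i=1..Nb. 1)"
    using assms(3) vertex_zero by simp
  then show "(\<forall>j\<in>{1..Nv}. n0 j = 0) \<and> int Nb = D \<and> (\<forall>i\<in>{1..Nb}. np i = 1 \<and> nm i = 0)"
    using vertex_zero unit by simp
next
  assume unit_config: "(\<forall>j\<in>{1..Nv}. n0 j = 0) \<and> int Nb = D \<and> (\<forall>i\<in>{1..Nb}. np i = 1 \<and> nm i = 0)"
  have "(\<Sum>j=1..Nv. (real_of_int (n0 j))\<^sup>2) = 0"
    using unit_config by simp
  moreover have "(\<Sum>i=1..Nb. (real_of_int (nm i) + a)\<^sup>2 + (real_of_int (np i) - a)\<^sup>2)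
      = (\<Sum>i=1..Nb. a\<^sup>2 + (1 - a)\<^sup>2)"
    using unit_config by (intro sum.cong) auto
  moreover have "real Nb = of_int D"
    using unit_config by (metis of_int_of_nat_eq)
  ultimately show "energy a Nv Nb n0 np nm = of_int D * (a\<^sup>2 + (1 - a)\<^sup>2)"
    by (simp add: energy_def)
qed

theorem lemma6p2:
  fixes \<alpha> :: real and Nv Nb :: nat and n0 np nm :: "nat \<Rightarrow> int" and D :: int
  assumes "0 < \<alpha>" and "\<alpha> < pi / 2"
    and "(\<Sum>i=1..Nb. np i + nm i) + (\<Sum>j=1..Nv. n0 j) = D"
  shows "(\<Sum>j=1..Nv. (real_of_int (n0 j))\<^sup>2)
           + (\<Sum>i=1..Nb. (real_of_int (nm i) + \<alpha> / pi)\<^sup>2 + (real_of_int (np i) - \<alpha> / pi)\<^sup>2)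
         \<ge> real_of_int \<bar>D\<bar> * C_alpha \<alpha>
         \<and> (D > 0 \<longrightarrow>
         ((\<Sum>j=1..Nv. (real_of_int (n0 j))\<^sup>2)
           + (\<Sum>i=1..Nb. (real_of_int (nm i) + \<alpha> / pi)\<^sup>2 + (real_of_int (np i) - \<alpha> / pi)\<^sup>2)
           = real_of_int \<bar>D\<bar> * C_alpha \<alpha>
          \<longleftrightarrow> (\<forall>j\<in>{1..Nv}. n0 j = 0) \<and> int Nb = D \<and> (\<forall>i\<in>{1..Nb}. np i = 1 \<and> nm i = 0)))
         \<and> (D < 0 \<longrightarrow>
         ((\<Sum>j=1..Nv. (real_of_int (n0 j))\<^sup>2)
           + (\<Sum>i=1..Nb. (real_of_int (nm i) + \<alpha> / pi)\<^sup>2 + (real_of_int (np i) - \<alpha> / pi)\<^sup>2)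
           = real_of_int \<bar>D\<bar> * C_alpha \<alpha>
          \<longleftrightarrow> (\<forall>j\<in>{1..Nv}. n0 j = 0) \<and> int Nb = \<bar>D\<bar> \<and> (\<forall>i\<in>{1..Nb}. np i = 0 \<and> nm i = -1)))"
proof -
  define a where "a = \<alpha> / pi"
  have a: "0 < a" "a < 1/2"
    using assms(1,2) by (simp_all add: a_def divide_less_eq)
  have C: "C_alpha \<alpha> = a\<^sup>2 + (1 - a)\<^sup>2"
    by (simp add: C_alpha_def a_def)
  have lhs: "(\<Sum>j=1..Nv. (real_of_int (n0 j))\<^sup>2)
      + (\<Sum>i=1..Nb. (real_of_int (nm i) + \<alpha> / pi)\<^sup>2 + (real_of_int (np i) - \<alpha> / pi)\<^sup>2)
      = energy a Nv Nb n0 np nm"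
    by (simp add: energy_def a_def)
  have negated_charge: "(\<Sum>i=1..Nb. - nm i + - np i) + (\<Sum>j=1..Nv. - n0 j) = - D"
    unfolding assms(3)[symmetric] by (simp add: sum_negf sum_subtractf sum.distrib)
  show ?thesis
    unfolding lhs C
    using energy_ge_abs_charge[OF a assms(3)] energy_eq_pos_charge_iff[OF a assms(3)]
      energy_eq_pos_charge_iff[OF a negated_charge] energy_negate[of a Nv Nb n0 nm np]
    by auto
qed

end
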